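(* Let $f$ be a convex function on the $d\times d$ Hermitian matrices, differentiable at every non-singular $\rho\in\mathcal{D}$, and let $\tau\in(0,1)$. For every non-singular $\rho\in\mathcal{D}$ there exists $\alpha_\rho>0$ such that $$f(\rho(\alpha))\le f(\rho)+\tau\langle\nabla f(\rho),\rho(\alpha)-\rho\rangle\quad\text{for all }\alpha\in[0,\alpha_\rho].$$
   Context: $\mathcal{D}=\{\rho\in\mathbb{C}^{d\times d}:\rho\succeq0,\ \operatorname{tr}\rho=1\}$; $\langle A,B\rangle=\operatorname{tr}(A^{\mathrm H}B)$ and $\nabla f(\rho)$ is the Hermitian gradient w.r.t. this inner product. $\rho(\alpha):=\exp[\log\rho-\alpha\nabla f(\rho)]/\operatorname{tr}\exp[\log\rho-\alpha\nabla f(\rho)]$ (matrix exponential/logarithm), so $\rho(0)=\rho$. *)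

theory Defs
  imports "HOL-Analysis.Analysis"
begin

type_synonym 'n cmat = "complex^'n^'n"

definition adjoint_mat :: "'n::finite cmat \<Rightarrow> 'n cmat" where
  "adjoint_mat A = (\<chi> i j. cnj (A $ j $ i))"

definition hermitian :: "'n::finite cmat \<Rightarrow> bool" where
  "hermitian A \<longleftrightarrow> adjoint_mat A = A"

definition hs_inner :: "'n::finite cmat \<Rightarrow> 'n cmat \<Rightarrow> complex" where
  "hs_inner A B = trace (adjoint_mat A ** B)"

definition psd :: "'n::finite cmat \<Rightarrow> bool" where
  "psd A \<longleftrightarrow> hermitian A \<and> (\<forall>x::complex^'n. 0 \<le> Re (\<Sum>i\<in>UNIV. \<Sum>j\<in>UNIV. cnj (x $ i) * A $ i $ j * x $ j))"

definition density :: "'n::finite cmat set" where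
  "density = {\<rho>. psd \<rho> \<and> trace \<rho> = 1}"

primrec mpow :: "'n::finite cmat \<Rightarrow> nat \<Rightarrow> 'n cmat" where
  "mpow A 0 = mat 1"
| "mpow A (Suc k) = A ** mpow A k"

definition mexp :: "'n::finite cmat \<Rightarrow> 'n cmat" where
  "mexp A = (\<Sum>k. (1 / fact k) *\<^sub>R mpow A k)"

definition mlog :: "'n::finite cmat \<Rightarrow> 'n cmat" where
  "mlog A = (THE L. hermitian L \<and> mexp L = A)"

text \<open>The update rho(alpha) = exp[log rho - alpha G] / tr exp[log rho - alpha G], G the gradient.\<close>
definition eg_step :: "'n::finite cmat \<Rightarrow> 'n cmat \<Rightarrow> real \<Rightarrow> 'n cmat" where
  "eg_step G \<rho> \<alpha> = (let E = mexp (mlog \<rho> - \<alpha> *\<^sub>R G) in (\<chi> i j. E $ i $ j / trace E))"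

end

theory Submission
  imports Defs
begin

(* Write rho = U diag(p) U^H with p > 0, let sigma = rho(alpha), D = sigma - rho and
   Y = log sigma - log rho. The normalisation in rho(alpha) only shifts the logarithm by a
   multiple of the identity, so Y = -alpha G - c I, and since tr D = 0 this gives
   <Y, D> = -alpha <G, D>. Expanded in the eigenbases of sigma and rho, the quantities
   |D|^2, |Y|^2 and <Y, D> are combinations with the same nonnegative weights of
   (s_i - p_j)^2, (ln s_i - ln p_j)^2 and (ln s_i - ln p_j)(s_i - p_j). For alpha <= 1 all
   eigenvalues s_i, p_j lie in [m, 1] for one m > 0, and the elementary bounds for the
   logarithm on [m, 1] give |D|^2 <= -alpha <G, D> and m |Y|^2 <= -alpha <G, D>. Together with
   |Y| >= alpha |P|, P the trace-free part of G, this yields -<G, D> >= sqrt m |P| |D|: a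
   descent bound that is linear in |D| uniformly in alpha. Differentiability of f at rho then
   gives the Armijo inequality for all small alpha. *)

definition real_diag :: "('n::finite \<Rightarrow> real) \<Rightarrow> 'n cmat" where
  "real_diag d = (\<chi> i j. if i = j then complex_of_real (d i) else 0)"

definition unitary :: "'n::finite cmat \<Rightarrow> bool" where
  "unitary U \<longleftrightarrow> adjoint_mat U ** U = mat 1 \<and> U ** adjoint_mat U = mat 1"

lemma adjoint_mat_nth [simp]: "adjoint_mat A $ i $ j = cnj (A $ j $ i)"
  by (simp add: adjoint_mat_def)

lemma matrix_matrix_mult_nth: "(A ** B) $ i $ j = (\<Sum>k\<in>UNIV. A $ i $ k * B $ k $ j)"
  by (simp add: matrix_matrix_mult_def)

lemma scaleR_matrix_nth: "(c *\<^sub>R M) $ i $ j = complex_of_real c * (M $ i $ j :: complex)"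
  by (simp only: vector_scaleR_component) (simp add: scaleR_conv_of_real)

lemma adjoint_mat_mult: "adjoint_mat (A ** B) = adjoint_mat B ** adjoint_mat (A::'n::finite cmat)"
  by (simp add: vec_eq_iff matrix_matrix_mult_nth mult.commute)

lemma adjoint_mat_adjoint_mat [simp]: "adjoint_mat (adjoint_mat A) = A"
  by (simp add: vec_eq_iff)

lemma adjoint_mat_mat_1 [simp]: "adjoint_mat (mat 1 :: 'n::finite cmat) = mat 1"
  by (simp add: vec_eq_iff mat_def)

lemma adjoint_mat_diff: "adjoint_mat (A - B) = adjoint_mat A - adjoint_mat (B::'n::finite cmat)"
  by (simp add: vec_eq_iff)

lemma adjoint_mat_scaleR: "adjoint_mat (c *\<^sub>R A) = c *\<^sub>R adjoint_mat (A::'n::finite cmat)"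
  by (simp add: vec_eq_iff complex_cnj_scaleR)

lemma matrix_mult_diff_left: "(A::'n::finite cmat) ** (B - C) = A ** B - A ** C"
  by (simp add: vec_eq_iff matrix_matrix_mult_nth right_diff_distrib sum_subtractf)

lemma matrix_mult_diff_right: "((A::'n::finite cmat) - B) ** C = A ** C - B ** C"
  by (simp add: vec_eq_iff matrix_matrix_mult_nth left_diff_distrib sum_subtractf)

lemma real_diag_nth [simp]: "real_diag d $ i $ j = (if i = j then complex_of_real (d i) else 0)"
  by (simp add: real_diag_def)

lemma adjoint_mat_real_diag [simp]: "adjoint_mat (real_diag d) = real_diag d"
  by (simp add: vec_eq_iff)

lemma real_diag_mult_nth: "(real_diag d ** B) $ i $ j = d i * B $ i $ j"
proof -
  have "(real_diag d ** B) $ i $ j = (\<Sum>k\<in>UNIV. if k = i then complex_of_real (d i) * B $ i $ j else 0)"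
    unfolding matrix_matrix_mult_nth by (rule sum.cong) auto
  then show ?thesis by simp
qed

lemma mult_real_diag_nth: "(B ** real_diag d) $ i $ j = B $ i $ j * d j"
proof -
  have "(B ** real_diag d) $ i $ j = (\<Sum>k\<in>UNIV. if k = j then B $ i $ j * complex_of_real (d j) else 0)"
    unfolding matrix_matrix_mult_nth by (rule sum.cong) auto
  then show ?thesis by simp
qed

lemma real_diag_mult_real_diag: "real_diag a ** real_diag b = real_diag (\<lambda>i. a i * b i)"
  by (simp add: vec_eq_iff real_diag_mult_nth)

lemma mat_1_eq_real_diag: "(mat 1 :: 'n::finite cmat) = real_diag (\<lambda>_. 1)"
  by (simp add: vec_eq_iff mat_def)

lemma real_diag_diff_const: "real_diag (\<lambda>i. d i - c) = real_diag d - c *\<^sub>R (mat 1 :: 'n::finite cmat)"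
  by (simp add: vec_eq_iff scaleR_matrix_nth mat_def del: vector_scaleR_component)

lemma trace_nth: "trace A = (\<Sum>i\<in>UNIV. A $ i $ i)"
  by (simp add: trace_def)

lemma Re_hs_inner: "Re (hs_inner A B) = A \<bullet> B"
  unfolding hs_inner_def trace_nth matrix_matrix_mult_nth inner_vec_def inner_complex_def Re_sum
  by (subst sum.swap) simp

lemma inner_mat_1: "mat 1 \<bullet> (X::'n::finite cmat) = Re (trace X)"
  by (simp add: Re_hs_inner[symmetric] hs_inner_def)

lemma unitaryD:
  "unitary U \<Longrightarrow> adjoint_mat U ** U = mat 1" "unitary U \<Longrightarrow> U ** adjoint_mat U = mat 1"
  by (auto simp: unitary_def)

lemma unitary_adjoint_mat: "unitary U \<Longrightarrow> unitary (adjoint_mat U)"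
  by (simp add: unitary_def)

lemma unitary_cancel:
  assumes "unitary V"
  shows "adjoint_mat V ** (V ** X) = X" "V ** (adjoint_mat V ** X) = X"
  using assms by (simp_all add: unitary_def matrix_mul_assoc)

lemma hermitian_unitary_diag: "hermitian (U ** real_diag d ** adjoint_mat U)"
  unfolding hermitian_def by (simp add: adjoint_mat_mult matrix_mul_assoc)

lemma unitary_diag_nth:
  "(U ** real_diag d ** adjoint_mat U) $ i $ j
    = (\<Sum>l\<in>UNIV. U $ i $ l * complex_of_real (d l) * cnj (U $ j $ l))"
  by (subst matrix_matrix_mult_nth) (simp add: mult_real_diag_nth)

lemma trace_unitary_diag:
  assumes "unitary V"
  shows "trace (V ** real_diag e ** adjoint_mat V) = complex_of_real (\<Sum>i\<in>UNIV. e i)"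
proof -
  have "trace (V ** real_diag e ** adjoint_mat V) = trace (adjoint_mat V ** (V ** real_diag e))"
    by (rule trace_mul_sym)
  also have "\<dots> = trace (real_diag e)" by (simp add: unitary_cancel[OF assms])
  finally show ?thesis by (simp add: trace_nth)
qed

section \<open>The spectral theorem for Hermitian matrices\<close>

definition cinner :: "complex^'n::finite \<Rightarrow> complex^'n \<Rightarrow> complex" where
  "cinner x y = (\<Sum>i\<in>UNIV. cnj (x $ i) * y $ i)"

lemma Re_cinner: "Re (cinner x y) = x \<bullet> y"
  by (simp add: cinner_def inner_vec_def inner_complex_def Re_sum)

lemma Re_cinner_ii: "Re (cinner (\<chi> i. \<i> * v $ i) x) = Im (cinner v x)"
  by (simp add: cinner_def sum_distrib_left Re_sum Im_sum mult.assoc)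

lemma cinner_commute: "cinner y x = cnj (cinner x y)"
  by (simp add: cinner_def mult.commute)

lemma cinner_zero_right [simp]: "cinner x 0 = 0"
  by (simp add: cinner_def)

lemma cinner_add_right: "cinner x (y + z) = cinner x y + cinner x z"
  by (simp add: cinner_def distrib_left sum.distrib)

lemma scaleR_vector_nth: "(c *\<^sub>R x) $ i = complex_of_real c * (x $ i :: complex)"
  unfolding vector_scaleR_component by (simp add: scaleR_conv_of_real)

lemma cinner_scaleR_left: "cinner (c *\<^sub>R x) y = c * cinner x y"
  by (simp add: cinner_def sum_distrib_left scaleR_vector_nth mult.assoc del: vector_scaleR_component)

lemma cinner_scaleR_right: "cinner x (c *\<^sub>R y) = c * cinner x y"
  by (simp add: cinner_def sum_distrib_left scaleR_vector_nth mult.left_commute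
      del: vector_scaleR_component)

lemma cinner_self: "cinner x x = complex_of_real ((norm x)^2)"
proof -
  have "cinner x x = (\<Sum>i\<in>UNIV. complex_of_real ((cmod (x $ i))^2))"
    unfolding cinner_def by (rule sum.cong) (auto simp: complex_norm_square[symmetric] mult.commute)
  also have "\<dots> = complex_of_real (\<Sum>i\<in>UNIV. (cmod (x $ i))^2)" by simp
  also have "(\<Sum>i\<in>UNIV. (cmod (x $ i))^2) = (norm x)^2"
    unfolding norm_vec_def L2_set_def by (subst real_sqrt_pow2) (auto intro: sum_nonneg)
  finally show ?thesis by simp
qed

lemma matrix_vector_mult_scaleR_complex: "(A::'n::finite cmat) *v (c *\<^sub>R x) = c *\<^sub>R (A *v x)"
  by (simp add: vec_eq_iff matrix_vector_mult_def scaleR_vector_nth sum_distrib_left mult.left_commute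
      del: vector_scaleR_component)

lemma cinner_hermitian_mult:
  assumes "hermitian A"
  shows "cinner (A *v x) y = cinner x (A *v y)"
proof -
  have A: "\<And>i j. cnj (A $ i $ j) = A $ j $ i"
    using assms unfolding hermitian_def by (metis adjoint_mat_nth)
  have "cinner (A *v x) y = (\<Sum>i\<in>UNIV. \<Sum>j\<in>UNIV. cnj (A $ i $ j) * cnj (x $ j) * y $ i)"
    by (simp add: cinner_def matrix_vector_mult_def sum_distrib_right)
  also have "\<dots> = (\<Sum>j\<in>UNIV. \<Sum>i\<in>UNIV. cnj (A $ i $ j) * cnj (x $ j) * y $ i)"
    by (rule sum.swap)
  also have "\<dots> = cinner x (A *v y)"
    by (simp add: cinner_def matrix_vector_mult_def sum_distrib_left A mult.assoc mult.left_commute)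
  finally show ?thesis .
qed

lemma inner_hermitian_mult: "hermitian A \<Longrightarrow> (A *v x) \<bullet> y = x \<bullet> (A *v y)"
  using cinner_hermitian_mult by (metis Re_cinner)

lemma linear_quadratic_nonpos_imp_zero:
  fixes a b :: real
  assumes "\<And>t. a * t + b * t^2 \<le> 0"
  shows "a = 0"
proof (rule ccontr)
  assume "a \<noteq> 0"
  define c where "c = \<bar>b\<bar> + 1"
  define t where "t = a / (2 * c)"
  have c: "c > 0" unfolding c_def by simp
  have "a * t = a^2 / (2 * c)" unfolding t_def by (simp add: power2_eq_square)
  also have "\<dots> > 0" using \<open>a \<noteq> 0\<close> c by simp
  finally have at: "a * t > 0" .
  have "\<bar>b * t^2\<bar> \<le> c * t^2" unfolding c_def by (simp add: abs_mult mult_right_mono)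
  also have "\<dots> = a * t / 2" unfolding t_def using c by (simp add: power2_eq_square field_simps)
  finally show False using assms[of t] at by linarith
qed

lemma rayleigh_maximizer_exists:
  fixes A :: "'n::finite cmat"
  assumes W: "subspace W" and x: "x \<in> W" "x \<noteq> 0"
  shows "\<exists>u\<in>W. norm u = 1 \<and> (\<forall>y\<in>W. y \<bullet> (A *v y) \<le> (u \<bullet> (A *v u)) * (norm y)^2)"
proof -
  define q where "q y = y \<bullet> (A *v y)" for y
  define K where "K = sphere 0 1 \<inter> W"
  have "compact K" unfolding K_def by (intro compact_Int_closed compact_sphere closed_subspace W)
  moreover have "(1 / norm x) *\<^sub>R x \<in> K"
    using x W unfolding K_def by (auto intro: subspace_scale)
  moreover have "continuous_on K q"
    unfolding q_def by (intro continuous_intros linear_continuous_on matrix_vector_mul_bounded_linear)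
  ultimately obtain u where u: "u \<in> K" and umax: "\<And>y. y \<in> K \<Longrightarrow> q y \<le> q u"
    using continuous_attains_sup[of K q] by blast
  have "q y \<le> q u * (norm y)^2" if "y \<in> W" for y
  proof (cases "y = 0")
    case True
    then show ?thesis by (simp add: q_def)
  next
    case False
    have "(1 / norm y) *\<^sub>R y \<in> K" using False that W unfolding K_def by (auto intro: subspace_scale)
    then have "q ((1 / norm y) *\<^sub>R y) \<le> q u" by (rule umax)
    moreover have "q ((1 / norm y) *\<^sub>R y) = q y / (norm y)^2"
      by (simp add: q_def matrix_vector_mult_scaleR_complex power2_eq_square)
    ultimately show ?thesis using False by (simp add: field_simps)
  qed
  then show ?thesis using u unfolding K_def q_def by auto
qed

lemma rayleigh_maximizer_eigenvector:
  fixes A :: "'n::finite cmat"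
  assumes herm: "hermitian A" and W: "subspace W" and inv: "\<And>x. x \<in> W \<Longrightarrow> A *v x \<in> W"
    and u: "u \<in> W" "norm u = 1"
    and max: "\<And>y. y \<in> W \<Longrightarrow> y \<bullet> (A *v y) \<le> (u \<bullet> (A *v u)) * (norm y)^2"
  shows "A *v u = (u \<bullet> (A *v u)) *\<^sub>R u"
proof -
  define \<mu> where "\<mu> = u \<bullet> (A *v u)"
  define z where "z = A *v u - \<mu> *\<^sub>R u"
  have uu: "u \<bullet> u = 1" using u(2) by (metis power2_norm_eq_inner one_power2)
  have "2 * (w \<bullet> z) = 0" if w: "w \<in> W" for w
  proof (rule linear_quadratic_nonpos_imp_zero)
    fix t :: real
    \<comment> \<open>the quadratic form of \<open>A - \<mu>\<close> attains its maximum 0 on \<open>W\<close> at \<open>u\<close>\<close>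
    have "(u + t *\<^sub>R w) \<bullet> (A *v (u + t *\<^sub>R w)) \<le> \<mu> * (norm (u + t *\<^sub>R w))^2"
      using max[of "u + t *\<^sub>R w"] u w W unfolding \<mu>_def by (auto intro: subspace_add subspace_scale)
    then show "(2 * (w \<bullet> z)) * t + (w \<bullet> (A *v w) - \<mu> * (norm w)^2) * t^2 \<le> 0"
      using inner_hermitian_mult[OF herm, of w u]
      unfolding z_def \<mu>_def power2_norm_eq_inner
      by (simp add: matrix_vector_right_distrib matrix_vector_mult_scaleR_complex inner_add_left
          inner_add_right inner_diff_right uu inner_commute power2_eq_square algebra_simps)
  qed
  moreover have "z \<in> W" unfolding z_def using inv u(1) W by (intro subspace_diff subspace_scale)
  ultimately have "z = 0" by (metis inner_eq_zero_iff mult_eq_0_iff zero_neq_numeral)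
  then show ?thesis unfolding z_def \<mu>_def by simp
qed

definition orthonormal_eigenset :: "'n::finite cmat \<Rightarrow> (complex^'n) set \<Rightarrow> bool" where
  "orthonormal_eigenset A S \<longleftrightarrow> finite S \<and> (\<forall>v\<in>S. norm v = 1 \<and> (\<exists>l::real. A *v v = l *\<^sub>R v))
     \<and> (\<forall>v\<in>S. \<forall>w\<in>S. v \<noteq> w \<longrightarrow> cinner v w = 0)"

lemma orthogonal_complement_nontrivial:
  fixes S :: "(complex^'n::finite) set"
  assumes "finite S" "card S < CARD('n)"
  shows "\<exists>x. x \<noteq> 0 \<and> (\<forall>v\<in>S. cinner v x = 0)"
proof -
  \<comment> \<open>complex orthogonality to \<open>v\<close> is real orthogonality to \<open>v\<close> and \<open>\<i> v\<close>\<close>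
  define iS where "iS = (\<lambda>v. (\<chi> i. \<i> * v $ i) :: complex^'n) ` S"
  have "dim (S \<union> iS) \<le> card S + card iS"
    using assms(1) iS_def by (metis card_Un_le dim_le_card' finite_UnI finite_imageI le_trans)
  also have "card iS \<le> card S" unfolding iS_def by (rule card_image_le[OF assms(1)])
  finally have "dim (S \<union> iS) < DIM(complex^'n)" using assms(2) by simp
  then obtain x where "x \<noteq> 0" and xo: "\<And>y. y \<in> span (S \<union> iS) \<Longrightarrow> orthogonal x y"
    using orthogonal_to_subspace_exists by blast
  moreover have "cinner v x = 0" if v: "v \<in> S" for v
  proof -
    have "Re (cinner v x) = 0"
      using xo[of v] v by (simp add: span_base Re_cinner orthogonal_def inner_commute)
    moreover have "Im (cinner v x) = 0"
      using xo[of "\<chi> i. \<i> * v $ i"] v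
      by (simp add: span_base iS_def Re_cinner_ii[symmetric] Re_cinner orthogonal_def inner_commute)
    ultimately show ?thesis by (simp add: complex_eq_iff)
  qed
  ultimately show ?thesis by blast
qed

lemma orthonormal_eigenset_extend:
  fixes A :: "'n::finite cmat"
  assumes herm: "hermitian A" and S: "orthonormal_eigenset A S" and card: "card S < CARD('n)"
  shows "\<exists>u. u \<notin> S \<and> orthonormal_eigenset A (insert u S)"
proof -
  define W where "W = {x. \<forall>v\<in>S. cinner v x = 0}"
  have W: "subspace W"
    unfolding subspace_def W_def by (simp add: cinner_add_right cinner_scaleR_right)
  have inv: "A *v x \<in> W" if "x \<in> W" for x
  proof -
    have "cinner v (A *v x) = 0" if "v \<in> S" for v
    proof -
      obtain l where "A *v v = l *\<^sub>R v" using S \<open>v \<in> S\<close> unfolding orthonormal_eigenset_def by blast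
      then show ?thesis using \<open>x \<in> W\<close> \<open>v \<in> S\<close>
        by (simp add: cinner_hermitian_mult[OF herm, symmetric] cinner_scaleR_left W_def)
    qed
    then show ?thesis by (simp add: W_def)
  qed
  obtain x where "x \<in> W" "x \<noteq> 0"
    using orthogonal_complement_nontrivial[OF _ card] S unfolding W_def orthonormal_eigenset_def by blast
  then obtain u where u: "u \<in> W" "norm u = 1" and "\<forall>y\<in>W. y \<bullet> (A *v y) \<le> (u \<bullet> (A *v u)) * (norm y)^2"
    using rayleigh_maximizer_exists[OF W] by blast
  then have Au: "A *v u = (u \<bullet> (A *v u)) *\<^sub>R u"
    using rayleigh_maximizer_eigenvector[OF herm W inv] by blast
  have "u \<notin> S"
  proof
    assume "u \<in> S"
    then have "cinner u u = 0" using u(1) by (simp add: W_def)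
    then show False using u(2) by (simp add: cinner_self)
  qed
  moreover have "cinner u v = 0" if "v \<in> S" for v
    using u(1) that cinner_commute[of u v] by (simp add: W_def)
  ultimately show ?thesis
    using S u Au unfolding orthonormal_eigenset_def W_def by auto
qed

lemma orthonormal_eigenset_exists:
  fixes A :: "'n::finite cmat"
  assumes "hermitian A"
  shows "k \<le> CARD('n) \<Longrightarrow> \<exists>S. orthonormal_eigenset A S \<and> card S = k"
proof (induction k)
  case 0
  have "orthonormal_eigenset A {}" by (simp add: orthonormal_eigenset_def)
  then show ?case by force
next
  case (Suc k)
  then obtain S where S: "orthonormal_eigenset A S" "card S = k" by auto
  with Suc.prems have "card S < CARD('n)" by simp
  then obtain u where "u \<notin> S" "orthonormal_eigenset A (insert u S)"
    using orthonormal_eigenset_extend[OF assms S(1)] by blast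
  moreover have "finite S" using S orthonormal_eigenset_def by blast
  ultimately show ?case using S by (metis card_insert_disjoint)
qed

theorem hermitian_spectral_decomposition:
  fixes A :: "'n::finite cmat"
  assumes "hermitian A"
  shows "\<exists>U d. unitary U \<and> A = U ** real_diag d ** adjoint_mat U"
proof -
  obtain S where S: "orthonormal_eigenset A S" "card S = CARD('n)"
    using orthonormal_eigenset_exists[OF assms] by blast
  then obtain e where e: "bij_betw e (UNIV::'n set) S"
    using finite_same_card_bij[of "UNIV::'n set" S] unfolding orthonormal_eigenset_def by auto
  then have eS: "e j \<in> S" and einj: "e j = e k \<Longrightarrow> j = k" for j k
    by (auto simp: bij_betw_def inj_on_def)
  define U :: "'n cmat" where "U = (\<chi> i j. e j $ i)"
  define d where "d j = (SOME l::real. A *v e j = l *\<^sub>R e j)" for j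
  have ed: "A *v e j = d j *\<^sub>R e j" for j
    unfolding d_def using S(1) eS[of j] unfolding orthonormal_eigenset_def by (metis (mono_tags) someI_ex)
  have "(adjoint_mat U ** U) $ j $ k = mat 1 $ j $ k" for j k
  proof -
    have "(adjoint_mat U ** U) $ j $ k = cinner (e j) (e k)"
      by (simp add: matrix_matrix_mult_nth U_def cinner_def)
    moreover have "cinner (e j) (e k) = 0" if "j \<noteq> k"
      using S(1) eS einj that unfolding orthonormal_eigenset_def by metis
    ultimately show ?thesis
      using S(1) eS unfolding orthonormal_eigenset_def by (auto simp: cinner_self mat_def)
  qed
  then have UU: "adjoint_mat U ** U = mat 1" by (simp add: vec_eq_iff)
  then have UU': "U ** adjoint_mat U = mat 1" using matrix_left_right_inverse by blast
  have "(A ** U) $ i $ j = (U ** real_diag d) $ i $ j" for i j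
  proof -
    have "(A ** U) $ i $ j = (A *v e j) $ i"
      by (simp add: matrix_matrix_mult_nth matrix_vector_mult_def U_def)
    also have "\<dots> = complex_of_real (d j) * e j $ i"
      by (simp add: ed scaleR_vector_nth del: vector_scaleR_component)
    finally show ?thesis by (simp add: mult_real_diag_nth U_def mult.commute)
  qed
  then have AU: "A ** U = U ** real_diag d" by (simp add: vec_eq_iff)
  have "A = A ** (U ** adjoint_mat U)" by (simp add: UU')
  also have "\<dots> = U ** real_diag d ** adjoint_mat U" by (metis matrix_mul_assoc AU)
  finally show ?thesis using UU UU' unitary_def by blast
qed

section \<open>Functions of Hermitian matrices\<close>

lemma mpow_real_diag: "mpow (real_diag d) k = real_diag (\<lambda>i. d i ^ k)"
  by (induction k) (simp_all add: mat_1_eq_real_diag real_diag_mult_real_diag)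

lemma mpow_unitary_conj:
  assumes "unitary U"
  shows "mpow (U ** D ** adjoint_mat U) k = U ** mpow D k ** adjoint_mat U"
proof (induction k)
  case 0
  then show ?case using assms by (simp add: unitary_def)
next
  case (Suc k)
  have "mpow (U ** D ** adjoint_mat U) (Suc k)
      = U ** D ** (adjoint_mat U ** U) ** mpow D k ** adjoint_mat U"
    by (simp add: Suc matrix_mul_assoc)
  also have "\<dots> = U ** mpow D (Suc k) ** adjoint_mat U"
    using assms by (simp add: unitary_def matrix_mul_assoc)
  finally show ?case .
qed

lemma sums_matrix_entrywise:
  fixes f :: "nat \<Rightarrow> 'n::finite cmat"
  assumes "\<And>i j. (\<lambda>k. f k $ i $ j) sums (M $ i $ j)"
  shows "f sums M"
  using assms unfolding sums_def by (intro vec_tendstoI) (simp add: sum_component vec_tendstoI)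

lemma mexp_unitary_diag:
  assumes U: "unitary U"
  shows "mexp (U ** real_diag d ** adjoint_mat U) = U ** real_diag (\<lambda>i. exp (d i)) ** adjoint_mat U"
  unfolding mexp_def
proof (rule sums_unique[symmetric], rule sums_matrix_entrywise)
  fix i j
  have "(\<lambda>k. complex_of_real (d l ^ k / fact k)) sums complex_of_real (exp (d l))" for l
    using sums_of_real[OF exp_converges[of "d l"]] by (simp only: real_scaleR_def divide_inverse mult.commute)
  then have "(\<lambda>k. \<Sum>l\<in>UNIV. U $ i $ l * cnj (U $ j $ l) * complex_of_real (d l ^ k / fact k))
      sums (\<Sum>l\<in>UNIV. U $ i $ l * cnj (U $ j $ l) * complex_of_real (exp (d l)))"
    by (intro sums_sum sums_mult)
  moreover have "((1 / fact k) *\<^sub>R mpow (U ** real_diag d ** adjoint_mat U) k) $ i $ j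
      = (\<Sum>l\<in>UNIV. U $ i $ l * cnj (U $ j $ l) * complex_of_real (d l ^ k / fact k))" for k
    by (simp add: mpow_unitary_conj[OF U] mpow_real_diag unitary_diag_nth scaleR_matrix_nth
        sum_distrib_left mult_ac del: vector_scaleR_component)
  ultimately show "(\<lambda>k. ((1 / fact k) *\<^sub>R mpow (U ** real_diag d ** adjoint_mat U) k) $ i $ j)
      sums (U ** real_diag (\<lambda>i. exp (d i)) ** adjoint_mat U) $ i $ j"
    by (simp add: unitary_diag_nth mult_ac)
qed

text \<open>Conjugating one diagonalisation into the other gives a matrix \<open>W\<close> with \<open>W $ i $ j = 0\<close>
  unless \<open>a j = b i\<close>, so \<open>W\<close> also intertwines \<open>g \<circ> a\<close> and \<open>g \<circ> b\<close>.\<close>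

lemma unitary_diag_map_eq:
  assumes U: "unitary U" and V: "unitary V"
    and eq: "V ** real_diag a ** adjoint_mat V = U ** real_diag b ** adjoint_mat U"
  shows "V ** real_diag (\<lambda>i. g (a i)) ** adjoint_mat V = U ** real_diag (\<lambda>i. g (b i)) ** adjoint_mat U"
proof -
  define W where "W = adjoint_mat U ** V"
  have "W ** real_diag a = adjoint_mat U ** (V ** real_diag a ** adjoint_mat V) ** V"
    unfolding W_def by (simp add: unitaryD[OF V] unitary_cancel[OF V] flip: matrix_mul_assoc)
  also have "\<dots> = real_diag b ** W"
    unfolding eq W_def by (simp add: unitaryD[OF U] unitary_cancel[OF U] flip: matrix_mul_assoc)
  finally have "W $ i $ j * a j = b i * W $ i $ j" for i j
    by (metis mult_real_diag_nth real_diag_mult_nth)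
  then have "W $ i $ j = 0 \<or> a j = b i" for i j by (simp add: mult.commute)
  then have Wg: "W ** real_diag (\<lambda>i. g (a i)) = real_diag (\<lambda>i. g (b i)) ** W"
    by (auto simp: vec_eq_iff real_diag_mult_nth mult_real_diag_nth mult.commute; metis)
  have "V ** real_diag (\<lambda>i. g (a i)) ** adjoint_mat V
      = U ** (W ** real_diag (\<lambda>i. g (a i))) ** adjoint_mat V"
    unfolding W_def by (simp add: unitaryD[OF U] unitary_cancel[OF U] flip: matrix_mul_assoc)
  also have "\<dots> = U ** (real_diag (\<lambda>i. g (b i)) ** W) ** adjoint_mat V"
    by (simp only: Wg)
  also have "\<dots> = U ** real_diag (\<lambda>i. g (b i)) ** adjoint_mat U"
    unfolding W_def by (simp add: unitaryD[OF V] unitary_cancel[OF V] flip: matrix_mul_assoc)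
  finally show ?thesis .
qed

lemma mlog_unitary_diag:
  assumes U: "unitary U" and p: "\<And>i. p i > 0"
  shows "mlog (U ** real_diag p ** adjoint_mat U) = U ** real_diag (\<lambda>i. ln (p i)) ** adjoint_mat U"
  unfolding mlog_def
proof (rule the_equality)
  show "hermitian (U ** real_diag (\<lambda>i. ln (p i)) ** adjoint_mat U) \<and>
      mexp (U ** real_diag (\<lambda>i. ln (p i)) ** adjoint_mat U) = U ** real_diag p ** adjoint_mat U"
    using p by (simp add: hermitian_unitary_diag mexp_unitary_diag[OF U])
next
  fix L assume L: "hermitian L \<and> mexp L = U ** real_diag p ** adjoint_mat U"
  then obtain V \<mu> where V: "unitary V" and LV: "L = V ** real_diag \<mu> ** adjoint_mat V"
    using hermitian_spectral_decomposition by blast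
  then have "V ** real_diag (\<lambda>i. exp (\<mu> i)) ** adjoint_mat V = U ** real_diag p ** adjoint_mat U"
    using L mexp_unitary_diag[OF V] by simp
  from unitary_diag_map_eq[OF U V this, of ln] show "L = U ** real_diag (\<lambda>i. ln (p i)) ** adjoint_mat U"
    using LV by simp
qed

definition softmax :: "('n::finite \<Rightarrow> real) \<Rightarrow> 'n \<Rightarrow> real" where
  "softmax \<mu> i = exp (\<mu> i) / (\<Sum>j\<in>UNIV. exp (\<mu> j))"

lemma softmax_pos: "softmax \<mu> i > 0"
  unfolding softmax_def by (intro divide_pos_pos sum_pos) auto

lemma sum_softmax: "(\<Sum>i\<in>UNIV. softmax \<mu> i) = 1"
proof -
  have "(\<Sum>j\<in>UNIV. exp (\<mu> j)) > 0" by (intro sum_pos) auto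
  then show ?thesis by (simp add: softmax_def sum_divide_distrib[symmetric])
qed

lemma ln_softmax: "ln (softmax \<mu> i) = \<mu> i - ln (\<Sum>j\<in>UNIV. exp (\<mu> j))"
proof -
  have "(\<Sum>j\<in>UNIV. exp (\<mu> j)) > 0" by (intro sum_pos) auto
  then show ?thesis by (simp add: softmax_def ln_div)
qed

lemma softmax_ge:
  fixes \<mu> :: "'n::finite \<Rightarrow> real"
  assumes "\<And>i. a \<le> \<mu> i" "\<And>i. \<mu> i \<le> b"
  shows "exp (a - b) / real CARD('n) \<le> softmax \<mu> i"
proof -
  have "(\<Sum>j\<in>UNIV. exp (\<mu> j)) \<le> (\<Sum>j\<in>(UNIV::'n set). exp b)"
    using assms(2) by (intro sum_mono) simp
  then have "(\<Sum>j\<in>UNIV. exp (\<mu> j)) \<le> real CARD('n) * exp b" by simp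
  moreover have "exp a \<le> exp (\<mu> i)" using assms(1) by simp
  moreover have "(\<Sum>j\<in>UNIV. exp (\<mu> j)) > 0" by (intro sum_pos) auto
  ultimately have "exp a / (real CARD('n) * exp b) \<le> exp (\<mu> i) / (\<Sum>j\<in>UNIV. exp (\<mu> j))"
    by (intro frac_le) auto
  then show ?thesis by (simp add: softmax_def exp_diff field_simps)
qed

lemma le_one_of_sum_eq_one:
  fixes p :: "'n::finite \<Rightarrow> real"
  assumes "\<And>i. 0 \<le> p i" "(\<Sum>i\<in>UNIV. p i) = 1"
  shows "p i \<le> 1"
  using member_le_sum[of i UNIV p] assms by simp

section \<open>Comparing two diagonalisations\<close>

lemma inner_unitary_conj:
  fixes X Y :: "'n::finite cmat"
  assumes U: "unitary U" and V: "unitary V"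
  shows "(V ** X ** adjoint_mat U) \<bullet> (V ** Y ** adjoint_mat U) = X \<bullet> Y"
proof -
  have "hs_inner (V ** X ** adjoint_mat U) (V ** Y ** adjoint_mat U)
      = trace (U ** (adjoint_mat X ** Y ** adjoint_mat U))"
    unfolding hs_inner_def adjoint_mat_mult by (simp add: unitary_cancel[OF V] flip: matrix_mul_assoc)
  also have "\<dots> = trace ((adjoint_mat X ** Y ** adjoint_mat U) ** U)" by (rule trace_mul_sym)
  also have "\<dots> = hs_inner X Y"
    unfolding hs_inner_def by (simp add: unitaryD[OF U] flip: matrix_mul_assoc)
  finally show ?thesis by (metis Re_hs_inner)
qed

lemma norm_diag_unitary_conj_le:
  assumes "unitary V"
  shows "cmod ((adjoint_mat V ** G ** V) $ i $ i) \<le> norm G"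
proof -
  have "cmod ((adjoint_mat V ** G ** V) $ i $ i) \<le> norm ((adjoint_mat V ** G ** V) $ i)"
    by (rule Finite_Cartesian_Product.norm_nth_le)
  also have "\<dots> \<le> norm (adjoint_mat V ** G ** V)" by (rule Finite_Cartesian_Product.norm_nth_le)
  also have "\<dots> = norm G"
    using inner_unitary_conj[OF unitary_adjoint_mat[OF assms] unitary_adjoint_mat[OF assms]]
    by (simp add: norm_eq_sqrt_inner)
  finally show ?thesis .
qed

definition overlap_weight :: "'n::finite cmat \<Rightarrow> 'n cmat \<Rightarrow> 'n \<Rightarrow> 'n \<Rightarrow> real" where
  "overlap_weight V U i j = (cmod ((adjoint_mat V ** U) $ i $ j))^2"

lemma overlap_weight_nonneg: "overlap_weight V U i j \<ge> 0"
  by (simp add: overlap_weight_def)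

lemma inner_unitary_diag_diff:
  assumes U: "unitary U" and V: "unitary V"
  shows "(V ** real_diag a ** adjoint_mat V - U ** real_diag b ** adjoint_mat U) \<bullet>
         (V ** real_diag c ** adjoint_mat V - U ** real_diag d ** adjoint_mat U)
       = (\<Sum>i\<in>UNIV. \<Sum>j\<in>UNIV. overlap_weight V U i j * ((a i - b j) * (c i - d j)))"
proof -
  define W where "W = adjoint_mat V ** U"
  have conj: "V ** real_diag x ** adjoint_mat V - U ** real_diag y ** adjoint_mat U
           = V ** (real_diag x ** W - W ** real_diag y) ** adjoint_mat U" for x y
    unfolding W_def matrix_mult_diff_left matrix_mult_diff_right
    by (simp add: unitaryD[OF U] unitary_cancel[OF V] flip: matrix_mul_assoc)
  have nth: "(real_diag x ** W - W ** real_diag y) $ i $ j = complex_of_real (x i - y j) * W $ i $ j"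
    for x y i j
    by (simp add: real_diag_mult_nth mult_real_diag_nth algebra_simps)
  have inner_mult: "(complex_of_real r * z) \<bullet> (complex_of_real s * z) = r * s * (cmod z)^2" for r s z
    unfolding inner_complex_def cmod_power2 by (simp add: power2_eq_square algebra_simps)
  show ?thesis
    unfolding conj inner_unitary_conj[OF U V] unfolding inner_vec_def unfolding nth inner_mult
    unfolding overlap_weight_def W_def by (intro sum.cong refl) (simp add: mult_ac)
qed

lemma inner_unitary_diag_diff_mono:
  assumes U: "unitary U" and V: "unitary V"
    and le: "\<And>i j. k * ((a i - b j) * (c i - d j)) \<le> (a' i - b' j) * (c' i - d' j)"
  shows "k * ((V ** real_diag a ** adjoint_mat V - U ** real_diag b ** adjoint_mat U) \<bullet>
              (V ** real_diag c ** adjoint_mat V - U ** real_diag d ** adjoint_mat U))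
       \<le> (V ** real_diag a' ** adjoint_mat V - U ** real_diag b' ** adjoint_mat U) \<bullet>
         (V ** real_diag c' ** adjoint_mat V - U ** real_diag d' ** adjoint_mat U)"
  unfolding inner_unitary_diag_diff[OF U V] sum_distrib_left
proof (intro sum_mono)
  fix i j
  show "k * (overlap_weight V U i j * ((a i - b j) * (c i - d j)))
      \<le> overlap_weight V U i j * ((a' i - b' j) * (c' i - d' j))"
    using mult_left_mono[OF le overlap_weight_nonneg] by (simp add: mult_ac)
qed

lemma diag_unitary_conj_unitary_diag:
  assumes U: "unitary U" and V: "unitary V"
  shows "(adjoint_mat V ** (U ** real_diag d ** adjoint_mat U) ** V) $ i $ i
       = complex_of_real (\<Sum>l\<in>UNIV. overlap_weight V U i l * d l)"
proof -
  define W where "W = adjoint_mat V ** U"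
  have "adjoint_mat V ** (U ** real_diag d ** adjoint_mat U) ** V = W ** real_diag d ** adjoint_mat W"
    unfolding W_def adjoint_mat_mult by (simp add: matrix_mul_assoc)
  moreover have "W $ i $ l * complex_of_real (d l) * cnj (W $ i $ l)
      = complex_of_real (overlap_weight V U i l * d l)" for l
  proof -
    have "W $ i $ l * complex_of_real (d l) * cnj (W $ i $ l)
        = (W $ i $ l * cnj (W $ i $ l)) * complex_of_real (d l)"
      by (simp add: mult_ac)
    then show ?thesis
      by (simp only: W_def overlap_weight_def complex_norm_square[symmetric] of_real_mult)
  qed
  ultimately show ?thesis by (simp only: unitary_diag_nth of_real_sum)
qed

lemma sum_overlap_weight:
  assumes U: "unitary U" and V: "unitary V"
  shows "(\<Sum>l\<in>UNIV. overlap_weight V U i l) = 1"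
proof -
  have "adjoint_mat V ** (U ** real_diag (\<lambda>_. 1) ** adjoint_mat U) ** V = mat 1"
    using U V by (simp add: mat_1_eq_real_diag[symmetric] unitaryD)
  then have "(adjoint_mat V ** (U ** real_diag (\<lambda>_. 1) ** adjoint_mat U) ** V) $ i $ i = 1"
    by (simp add: mat_def)
  then show ?thesis
    unfolding diag_unitary_conj_unitary_diag[OF U V] by (simp only: of_real_eq_1_iff mult_1_right)
qed

lemma diag_unitary_conj_unitary_diag_bounds:
  assumes U: "unitary U" and V: "unitary V" and d: "\<And>l. a \<le> d l" "\<And>l. d l \<le> b"
  shows "a \<le> Re ((adjoint_mat V ** (U ** real_diag d ** adjoint_mat U) ** V) $ i $ i)"
    and "Re ((adjoint_mat V ** (U ** real_diag d ** adjoint_mat U) ** V) $ i $ i) \<le> b"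
proof -
  have avg: "(\<Sum>l\<in>UNIV. overlap_weight V U i l * x) = x" for x
    by (simp add: sum_overlap_weight[OF U V] flip: sum_distrib_right)
  have "(\<Sum>l\<in>UNIV. overlap_weight V U i l * a) \<le> (\<Sum>l\<in>UNIV. overlap_weight V U i l * d l)"
    and "(\<Sum>l\<in>UNIV. overlap_weight V U i l * d l) \<le> (\<Sum>l\<in>UNIV. overlap_weight V U i l * b)"
    using d by (intro sum_mono mult_left_mono overlap_weight_nonneg; simp)+
  then show "a \<le> Re ((adjoint_mat V ** (U ** real_diag d ** adjoint_mat U) ** V) $ i $ i)"
    and "Re ((adjoint_mat V ** (U ** real_diag d ** adjoint_mat U) ** V) $ i $ i) \<le> b"
    unfolding diag_unitary_conj_unitary_diag[OF U V] Re_complex_of_real avg .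
qed

lemma ln_diff_bounds:
  fixes x y :: real
  assumes "0 < y" "y \<le> x"
  shows "(x - y) / x \<le> ln x - ln y" "ln x - ln y \<le> (x - y) / y"
proof -
  have "ln (y / x) \<le> y / x - 1" "ln (x / y) \<le> x / y - 1"
    using assms by (intro ln_le_minus_one; simp)+
  then show "(x - y) / x \<le> ln x - ln y" "ln x - ln y \<le> (x - y) / y"
    using assms by (simp_all add: ln_div diff_divide_distrib)
qed

lemma square_diff_le_ln_diff_mult_diff:
  fixes a b :: real
  assumes "0 < a" "a \<le> 1" "0 < b" "b \<le> 1"
  shows "(a - b)^2 \<le> (ln a - ln b) * (a - b)"
proof -
  have *: "(x - y)^2 \<le> (ln x - ln y) * (x - y)" if "0 < y" "y \<le> x" "x \<le> 1" for x y :: real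
  proof -
    have "x - y \<le> (x - y) / x" using that by (simp add: le_divide_eq mult_left_le)
    also have "\<dots> \<le> ln x - ln y" using ln_diff_bounds(1) that by blast
    finally show ?thesis using that by (simp add: power2_eq_square mult_right_mono)
  qed
  show ?thesis
    using *[of b a] *[of a b] assms by (cases "b \<le> a") (auto simp: power2_commute algebra_simps)
qed

lemma ln_diff_square_le:
  fixes a b m :: real
  assumes "0 < m" "m \<le> a" "m \<le> b"
  shows "m * (ln a - ln b)^2 \<le> (ln a - ln b) * (a - b)"
proof -
  have *: "m * (ln x - ln y)^2 \<le> (ln x - ln y) * (x - y)" if "m \<le> y" "y \<le> x" for x y :: real
  proof -
    have ln_nonneg: "0 \<le> ln x - ln y" using assms that by simp
    have "m * (ln x - ln y) \<le> y * (ln x - ln y)" using that ln_nonneg by (simp add: mult_right_mono)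
    also have "\<dots> \<le> x - y" using ln_diff_bounds(2)[of y x] assms that by (simp add: field_simps)
    finally have "(m * (ln x - ln y)) * (ln x - ln y) \<le> (x - y) * (ln x - ln y)"
      using ln_nonneg by (rule mult_right_mono)
    then show ?thesis by (simp add: power2_eq_square mult_ac)
  qed
  show ?thesis
    using *[of b a] *[of a b] assms by (cases "b \<le> a") (auto simp: power2_commute algebra_simps)
qed

section \<open>The Armijo condition\<close>

lemma norm_le_of_norm_square_le_inner:
  fixes d g :: "'a::real_inner"
  assumes "(norm d)^2 \<le> - a * (g \<bullet> d)" "0 \<le> a"
  shows "norm d \<le> a * norm g"
proof (cases "d = 0")
  case False
  have "- (g \<bullet> d) \<le> norm g * norm d" using Cauchy_Schwarz_ineq2[of g d] by linarith
  then have "a * - (g \<bullet> d) \<le> a * (norm g * norm d)" using assms(2) by (rule mult_left_mono)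
  then have "norm d * norm d \<le> (a * norm g) * norm d"
    using assms(1) by (simp add: power2_eq_square mult_ac)
  then show ?thesis using False by simp
qed (use assms in simp)

lemma armijo_condition_for_small_steps:
  fixes f :: "'a::real_inner \<Rightarrow> real" and y :: "real \<Rightarrow> 'a"
  assumes deriv: "(f has_derivative (\<lambda>h. g \<bullet> h)) (at x within S)"
    and \<tau>: "\<tau> < 1" and c: "c > 0"
    and step: "\<And>\<alpha>. \<alpha> \<in> {0..1} \<Longrightarrow> y \<alpha> \<in> S \<and> (norm (y \<alpha> - x))^2 \<le> - \<alpha> * (g \<bullet> (y \<alpha> - x))
                 \<and> c * norm (y \<alpha> - x) \<le> - (g \<bullet> (y \<alpha> - x))"
  shows "\<exists>\<alpha>0>0. \<forall>\<alpha>\<in>{0..\<alpha>0}. f (y \<alpha>) \<le> f x + \<tau> * (g \<bullet> (y \<alpha> - x))"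
proof -
  have "(1 - \<tau>) * c > 0" using \<tau> c by simp
  then obtain \<delta> where \<delta>: "\<delta> > 0" and near: "\<And>z. z \<in> S \<Longrightarrow> norm (z - x) < \<delta> \<Longrightarrow>
      norm (f z - f x - g \<bullet> (z - x)) \<le> (1 - \<tau>) * c * norm (z - x)"
    using deriv unfolding has_derivative_within_alt by blast
  define \<alpha>0 where "\<alpha>0 = min 1 (\<delta> / (norm g + 1))"
  have "\<alpha>0 > 0" unfolding \<alpha>0_def using \<delta> by (simp add: add_nonneg_pos)
  moreover have "f (y \<alpha>) \<le> f x + \<tau> * (g \<bullet> (y \<alpha> - x))" if \<alpha>: "\<alpha> \<in> {0..\<alpha>0}" for \<alpha>
  proof -
    define d where "d = y \<alpha> - x"
    have "\<alpha> \<in> {0..1}" using \<alpha> by (simp add: \<alpha>0_def)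
    then have yS: "y \<alpha> \<in> S" and sq: "(norm d)^2 \<le> - \<alpha> * (g \<bullet> d)"
      and descent: "c * norm d \<le> - (g \<bullet> d)"
      using step unfolding d_def by auto
    have "norm d \<le> \<alpha> * norm g" using norm_le_of_norm_square_le_inner[OF sq] \<alpha> by simp
    also have "\<dots> \<le> \<delta> / (norm g + 1) * norm g"
      using \<alpha> by (intro mult_right_mono) (auto simp: \<alpha>0_def)
    also have "\<dots> < \<delta>"
      using \<delta> add_nonneg_pos[OF norm_ge_zero zero_less_one, of g] by (simp add: field_simps)
    finally have "f (y \<alpha>) - f x - g \<bullet> d \<le> (1 - \<tau>) * c * norm d"
      using near[OF yS] unfolding d_def by fastforce
    also have "\<dots> \<le> (1 - \<tau>) * - (g \<bullet> d)"
      using mult_left_mono[OF descent, of "1 - \<tau>"] \<tau> by (simp add: mult.assoc)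
    finally show ?thesis unfolding d_def by (simp add: algebra_simps)
  qed
  ultimately show ?thesis by blast
qed

section \<open>The exponentiated gradient step\<close>

lemma psd_unitary_diag_nonneg:
  assumes "psd (U ** real_diag p ** adjoint_mat U)" and U: "unitary U"
  shows "0 \<le> p i"
proof -
  define x where "x = (\<chi> k. U $ k $ i)"
  have "complex_of_real (p i) = (adjoint_mat U ** (U ** real_diag p ** adjoint_mat U) ** U) $ i $ i"
    by (simp add: unitaryD[OF U] unitary_cancel[OF U] flip: matrix_mul_assoc)
  also have "\<dots> = (\<Sum>k\<in>UNIV. \<Sum>l\<in>UNIV. cnj (x $ k) * (U ** real_diag p ** adjoint_mat U) $ k $ l * x $ l)"
    by (simp add: matrix_matrix_mult_nth sum_distrib_right x_def) (rule sum.swap)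
  finally have "p i = Re (\<Sum>k\<in>UNIV. \<Sum>l\<in>UNIV.
      cnj (x $ k) * (U ** real_diag p ** adjoint_mat U) $ k $ l * x $ l)"
    by (metis Re_complex_of_real)
  with assms(1) show ?thesis unfolding psd_def by simp
qed

lemma invertible_unitary_diag_nonzero:
  assumes "invertible (U ** real_diag p ** adjoint_mat U)" and U: "unitary U"
  shows "p i \<noteq> 0"
proof
  assume p0: "p i = 0"
  obtain B where B: "B ** (U ** real_diag p ** adjoint_mat U) = mat 1"
    using assms(1) unfolding invertible_def by blast
  have "(adjoint_mat U ** B ** U) ** real_diag p
      = adjoint_mat U ** (B ** (U ** real_diag p ** adjoint_mat U)) ** U"
    by (simp add: unitaryD[OF U] flip: matrix_mul_assoc)
  also have "\<dots> = mat 1" using B by (simp add: unitaryD[OF U])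
  finally have "((adjoint_mat U ** B ** U) ** real_diag p) $ i $ i = 1" by (simp add: mat_def)
  then show False using p0 by (simp add: mult_real_diag_nth)
qed

lemma invertible_density_unitary_diag:
  assumes "\<rho> \<in> density" and "invertible \<rho>"
  obtains U p where "unitary U" "\<rho> = U ** real_diag p ** adjoint_mat U"
    "\<And>i. 0 < p i" "(\<Sum>i\<in>UNIV. p i) = 1"
proof -
  have "hermitian \<rho>" using assms(1) by (simp add: density_def psd_def)
  then obtain U p where U: "unitary U" and \<rho>: "\<rho> = U ** real_diag p ** adjoint_mat U"
    using hermitian_spectral_decomposition by blast
  have "0 \<le> p i" "p i \<noteq> 0" for i
    using psd_unitary_diag_nonneg[OF _ U] invertible_unitary_diag_nonzero[OF _ U] assms \<rho>
    by (simp_all add: density_def)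
  then have "0 < p i" for i by (simp add: less_le)
  moreover have "complex_of_real (\<Sum>i\<in>UNIV. p i) = 1"
    using assms(1) trace_unitary_diag[OF U, of p] \<rho> by (simp add: density_def)
  then have "(\<Sum>i\<in>UNIV. p i) = 1" by (simp only: of_real_eq_1_iff)
  ultimately show ?thesis using that U \<rho> by blast
qed

lemma eg_step_unitary_diag:
  assumes G: "hermitian G" and U: "unitary U" and p: "\<And>i. 0 < p i"
  obtains V \<mu> where "unitary V"
    and "U ** real_diag (\<lambda>i. ln (p i)) ** adjoint_mat U - \<alpha> *\<^sub>R G = V ** real_diag \<mu> ** adjoint_mat V"
    and "eg_step G (U ** real_diag p ** adjoint_mat U) \<alpha> = V ** real_diag (softmax \<mu>) ** adjoint_mat V"
proof -
  define M where "M = U ** real_diag (\<lambda>i. ln (p i)) ** adjoint_mat U - \<alpha> *\<^sub>R G"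
  have "hermitian M" using G unfolding M_def hermitian_def
    by (simp add: adjoint_mat_diff adjoint_mat_scaleR adjoint_mat_mult matrix_mul_assoc)
  then obtain V \<mu> where V: "unitary V" and M: "M = V ** real_diag \<mu> ** adjoint_mat V"
    using hermitian_spectral_decomposition by blast
  have E: "mexp M = V ** real_diag (\<lambda>i. exp (\<mu> i)) ** adjoint_mat V"
    using M mexp_unitary_diag[OF V] by simp
  have "eg_step G (U ** real_diag p ** adjoint_mat U) \<alpha> = V ** real_diag (softmax \<mu>) ** adjoint_mat V"
    unfolding eg_step_def mlog_unitary_diag[OF U p] M_def[symmetric] Let_def E trace_unitary_diag[OF V]
    by (simp add: vec_eq_iff unitary_diag_nth softmax_def sum_divide_distrib)
  then show ?thesis using that V M unfolding M_def by blast
qed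

lemma mlog_unitary_diag_softmax:
  assumes V: "unitary V"
  shows "mlog (V ** real_diag (softmax \<mu>) ** adjoint_mat V)
       = V ** real_diag \<mu> ** adjoint_mat V - ln (\<Sum>j\<in>UNIV. exp (\<mu> j)) *\<^sub>R mat 1"
  unfolding mlog_unitary_diag[OF V softmax_pos] ln_softmax real_diag_diff_const
  by (simp add: matrix_mult_diff_left matrix_mult_diff_right matrix_scalar_ac
      unitaryD[OF V] flip: scalar_matrix_assoc)

lemma eigenvalue_bounds_ln_diff:
  fixes G :: "'n::finite cmat"
  assumes U: "unitary U" and V: "unitary V" and p: "\<And>i. 0 < p i" "\<And>i. p i \<le> 1"
    and \<alpha>: "0 \<le> \<alpha>" "\<alpha> \<le> 1"
    and eq: "U ** real_diag (\<lambda>i. ln (p i)) ** adjoint_mat U - \<alpha> *\<^sub>R G = V ** real_diag \<mu> ** adjoint_mat V"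
  shows "ln (Min (range p)) - norm G \<le> \<mu> i" and "\<mu> i \<le> norm G"
proof -
  define L where "L = adjoint_mat V ** (U ** real_diag (\<lambda>i. ln (p i)) ** adjoint_mat U) ** V"
  define H where "H = adjoint_mat V ** G ** V"
  have "real_diag \<mu> = adjoint_mat V ** (V ** real_diag \<mu> ** adjoint_mat V) ** V"
    by (simp add: unitaryD[OF V] unitary_cancel[OF V] flip: matrix_mul_assoc)
  also have "\<dots> = L - \<alpha> *\<^sub>R H"
    unfolding eq[symmetric] L_def H_def
    by (simp add: matrix_mult_diff_left matrix_mult_diff_right matrix_scalar_ac flip: scalar_matrix_assoc)
  finally have "real_diag \<mu> = L - \<alpha> *\<^sub>R H" .
  from arg_cong[OF this, of "\<lambda>M. Re (M $ i $ i)"]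
  have \<mu>: "\<mu> i = Re (L $ i $ i) - \<alpha> * Re (H $ i $ i)"
    by (simp add: scaleR_matrix_nth del: vector_scaleR_component)
  have "Min (range p) \<in> range p" by (intro Min_in) auto
  then have lower: "ln (Min (range p)) \<le> ln (p l)" for l using p(1) by (auto intro: Min_le)
  have upper: "ln (p l) \<le> 0" for l using p by simp
  have "ln (Min (range p)) \<le> Re (L $ i $ i)" "Re (L $ i $ i) \<le> 0"
    unfolding L_def using diag_unitary_conj_unitary_diag_bounds[OF U V lower upper] by auto
  moreover have "\<bar>\<alpha> * Re (H $ i $ i)\<bar> \<le> norm G"
  proof -
    have "\<bar>Re (H $ i $ i)\<bar> \<le> norm G"
      using abs_Re_le_cmod norm_diag_unitary_conj_le[OF V] unfolding H_def by (rule order_trans)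
    moreover have "\<alpha> * \<bar>Re (H $ i $ i)\<bar> \<le> \<bar>Re (H $ i $ i)\<bar>"
      using \<alpha> by (intro mult_left_le_one_le) auto
    ultimately show ?thesis using \<alpha> by (simp add: abs_mult)
  qed
  ultimately show "ln (Min (range p)) - norm G \<le> \<mu> i" "\<mu> i \<le> norm G"
    unfolding \<mu> by linarith+
qed

lemma eg_step_eigenvalues_ge:
  fixes G :: "'n::finite cmat"
  assumes U: "unitary U" and V: "unitary V" and p: "\<And>i. 0 < p i" "(\<Sum>i\<in>UNIV. p i) = 1"
    and \<alpha>: "0 \<le> \<alpha>" "\<alpha> \<le> 1"
    and eq: "U ** real_diag (\<lambda>i. ln (p i)) ** adjoint_mat U - \<alpha> *\<^sub>R G = V ** real_diag \<mu> ** adjoint_mat V"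
  defines "m \<equiv> Min (range p) * exp (- 2 * norm G) / real CARD('n)"
  shows "m \<le> softmax \<mu> i" and "m \<le> p i"
proof -
  have p1: "p i \<le> 1" for i using p le_one_of_sum_eq_one less_imp_le by metis
  have "Min (range p) \<in> range p" by (intro Min_in) auto
  then have pmin: "0 < Min (range p)" "Min (range p) \<le> p i" using p(1) by (auto intro: Min_le)
  have "exp (ln (Min (range p)) - norm G - norm G) = Min (range p) * exp (- 2 * norm G)"
    using pmin(1) by (simp add: exp_diff exp_minus field_simps flip: exp_add)
  then show "m \<le> softmax \<mu> i"
    unfolding m_def using eigenvalue_bounds_ln_diff[OF U V p(1) p1 \<alpha> eq]
    by (metis softmax_ge)
  have "1 \<le> real CARD('n)" using card_gt_0_iff[of "UNIV :: 'n set"] by simp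
  moreover have "exp (- 2 * norm G) \<le> 1" by simp
  ultimately have "exp (- 2 * norm G) / real CARD('n) \<le> 1" by (simp only: divide_le_eq_1_pos)
  then have "Min (range p) * (exp (- 2 * norm G) / real CARD('n)) \<le> Min (range p)"
    by (rule mult_left_le[OF _ less_imp_le[OF pmin(1)]])
  then show "m \<le> p i" using pmin(2) unfolding m_def by simp
qed

lemma sqrt_mult_le_of_squares_le:
  fixes a m t x y :: real
  assumes "0 < a" "0 \<le> m" "0 \<le> x" "0 \<le> y" "x^2 \<le> a * t" "m * (a * y)^2 \<le> a * t"
  shows "sqrt m * y * x \<le> t"
proof -
  have at: "0 \<le> a * t" using assms(5) by (meson order_trans zero_le_power2)
  have "(a * (sqrt m * y * x))^2 = (m * (a * y)^2) * x^2"
    using assms(2) by (simp add: power_mult_distrib)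
  also have "\<dots> \<le> (a * t)^2"
    unfolding power2_eq_square[of "a * t"] using assms at by (auto intro: mult_mono)
  finally have "a * (sqrt m * y * x) \<le> a * t" using at by (rule power2_le_imp_le)
  then show ?thesis using assms(1) by simp
qed

lemma norm_orthogonal_part_le:
  fixes x e :: "'a::real_inner"
  shows "\<bar>a\<bar> * norm (x - (x \<bullet> e / (e \<bullet> e)) *\<^sub>R e) \<le> norm (a *\<^sub>R x + b *\<^sub>R e)"
proof -
  define k where "k = x \<bullet> e / (e \<bullet> e)"
  have "orthogonal (x - k *\<^sub>R e) e"
    unfolding orthogonal_def k_def by (cases "e = 0") (simp_all add: inner_diff_left)
  then have "orthogonal (a *\<^sub>R (x - k *\<^sub>R e)) ((a * k + b) *\<^sub>R e)"
    by (simp add: orthogonal_clauses)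
  moreover have "a *\<^sub>R x + b *\<^sub>R e = a *\<^sub>R (x - k *\<^sub>R e) + (a * k + b) *\<^sub>R e"
    by (simp add: algebra_simps)
  ultimately have "(\<bar>a\<bar> * norm (x - k *\<^sub>R e))^2 \<le> (norm (a *\<^sub>R x + b *\<^sub>R e))^2"
    by (simp add: norm_add_Pythagorean)
  then show ?thesis unfolding k_def by (rule power2_le_imp_le) simp
qed

lemma eg_step_estimates:
  fixes G :: "'n::finite cmat"
  assumes G: "hermitian G" and U: "unitary U" and p: "\<And>i. 0 < p i" "(\<Sum>i\<in>UNIV. p i) = 1"
    and \<alpha>: "0 \<le> \<alpha>" "\<alpha> \<le> 1"
  defines "\<rho> \<equiv> U ** real_diag p ** adjoint_mat U"
    and "m \<equiv> Min (range p) * exp (- 2 * norm G) / real CARD('n)"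
    and "P \<equiv> G - (G \<bullet> mat 1 / (mat 1 \<bullet> (mat 1 :: 'n cmat))) *\<^sub>R mat 1"
  shows "hermitian (eg_step G \<rho> \<alpha>)"
    and "(norm (eg_step G \<rho> \<alpha> - \<rho>))^2 \<le> - \<alpha> * (G \<bullet> (eg_step G \<rho> \<alpha> - \<rho>))"
    and "m * (\<alpha> * norm P)^2 \<le> - \<alpha> * (G \<bullet> (eg_step G \<rho> \<alpha> - \<rho>))"
    and "G \<bullet> (eg_step G \<rho> \<alpha> - \<rho>) = P \<bullet> (eg_step G \<rho> \<alpha> - \<rho>)"
proof -
  obtain V \<mu> where V: "unitary V"
    and eq: "U ** real_diag (\<lambda>i. ln (p i)) ** adjoint_mat U - \<alpha> *\<^sub>R G = V ** real_diag \<mu> ** adjoint_mat V"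
    and \<sigma>: "eg_step G \<rho> \<alpha> = V ** real_diag (softmax \<mu>) ** adjoint_mat V"
    unfolding \<rho>_def by (rule eg_step_unitary_diag[OF G U p(1)])
  define D where "D = eg_step G \<rho> \<alpha> - \<rho>"
  define Y where "Y = mlog (eg_step G \<rho> \<alpha>) - mlog \<rho>"
  have Y_diag: "Y = V ** real_diag (\<lambda>i. ln (softmax \<mu> i)) ** adjoint_mat V
                  - U ** real_diag (\<lambda>i. ln (p i)) ** adjoint_mat U"
    unfolding Y_def \<sigma> unfolding \<rho>_def mlog_unitary_diag[OF V softmax_pos] mlog_unitary_diag[OF U p(1)] ..
  have Y_eq: "Y = (- \<alpha>) *\<^sub>R G + (- ln (\<Sum>j\<in>UNIV. exp (\<mu> j))) *\<^sub>R mat 1"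
    unfolding Y_def \<sigma> mlog_unitary_diag_softmax[OF V]
    unfolding \<rho>_def mlog_unitary_diag[OF U p(1)] eq[symmetric]
    by (simp add: algebra_simps)
  have trace: "mat 1 \<bullet> D = 0"
    unfolding D_def inner_mat_1 trace_sub \<sigma> unfolding \<rho>_def trace_unitary_diag[OF V] trace_unitary_diag[OF U]
      sum_softmax p(2) by simp
  then have YD: "Y \<bullet> D = - \<alpha> * (G \<bullet> D)" unfolding Y_eq by (simp add: inner_add_left inner_diff_left)
  have s1: "softmax \<mu> i \<le> 1" and p1: "p i \<le> 1" for i
    using le_one_of_sum_eq_one less_imp_le softmax_pos sum_softmax p by metis+
  have m: "0 < m" "m \<le> softmax \<mu> i" "m \<le> p i" for i
    using eg_step_eigenvalues_ge[OF U V p \<alpha> eq] p(1) unfolding m_def by (auto intro!: Min_in)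
  show "hermitian (eg_step G \<rho> \<alpha>)" unfolding \<sigma> by (rule hermitian_unitary_diag)
  have "1 * (D \<bullet> D) \<le> Y \<bullet> D"
    unfolding D_def \<sigma> Y_diag unfolding \<rho>_def
    by (rule inner_unitary_diag_diff_mono[OF U V])
      (simp add: square_diff_le_ln_diff_mult_diff softmax_pos s1 p p1 flip: power2_eq_square)
  then show "(norm D)^2 \<le> - \<alpha> * (G \<bullet> D)" using YD by (simp add: power2_norm_eq_inner)
  have "m * (Y \<bullet> Y) \<le> Y \<bullet> D"
    unfolding D_def \<sigma> Y_diag unfolding \<rho>_def
    by (rule inner_unitary_diag_diff_mono[OF U V])
      (simp add: ln_diff_square_le m flip: power2_eq_square)
  moreover have "\<bar>- \<alpha>\<bar> * norm P \<le> norm Y"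
    unfolding Y_eq P_def by (rule norm_orthogonal_part_le)
  then have "m * (\<alpha> * norm P)^2 \<le> m * (Y \<bullet> Y)"
    using m(1) \<alpha> by (simp add: power2_norm_eq_inner[symmetric] power_mono)
  ultimately show "m * (\<alpha> * norm P)^2 \<le> - \<alpha> * (G \<bullet> D)" using YD by linarith
  show "G \<bullet> D = P \<bullet> D" unfolding P_def using trace by (simp add: inner_diff_left)
qed

lemma eg_step_sufficient_descent:
  fixes \<rho> G :: "'n::finite cmat"
  assumes "\<rho> \<in> density" "invertible \<rho>" "hermitian G"
  shows "\<exists>c>0. \<forall>\<alpha>\<in>{0..1}. hermitian (eg_step G \<rho> \<alpha>) \<and>
      (norm (eg_step G \<rho> \<alpha> - \<rho>))^2 \<le> - \<alpha> * (G \<bullet> (eg_step G \<rho> \<alpha> - \<rho>)) \<and>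
      c * norm (eg_step G \<rho> \<alpha> - \<rho>) \<le> - (G \<bullet> (eg_step G \<rho> \<alpha> - \<rho>))"
proof -
  obtain U p where U: "unitary U" and \<rho>: "\<rho> = U ** real_diag p ** adjoint_mat U"
    and p: "\<And>i. 0 < p i" "(\<Sum>i\<in>UNIV. p i) = 1"
    using invertible_density_unitary_diag[OF assms(1,2)] by blast
  define m where "m = Min (range p) * exp (- 2 * norm G) / real CARD('n)"
  define P where "P = G - (G \<bullet> mat 1 / (mat 1 \<bullet> (mat 1 :: 'n cmat))) *\<^sub>R mat 1"
  have "Min (range p) \<in> range p" by (intro Min_in) auto
  then have m: "0 < m" using p(1) unfolding m_def by auto
  note estimates = eg_step_estimates[OF assms(3) U p, folded \<rho> m_def P_def]
  show ?thesis
  proof (cases "P = 0")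
    case True
    \<comment> \<open>\<open>G\<close> is a multiple of the identity, and the step does not move\<close>
    have "eg_step G \<rho> \<alpha> = \<rho>" if "\<alpha> \<in> {0..1}" for \<alpha>
      using estimates(2,4)[of \<alpha>] that True by simp
    moreover have "hermitian \<rho>" using assms(1) by (simp add: density_def psd_def)
    ultimately show ?thesis by (intro exI[of _ "1::real"]) simp
  next
    case False
    have "sqrt m * norm P * norm (eg_step G \<rho> \<alpha> - \<rho>) \<le> - (G \<bullet> (eg_step G \<rho> \<alpha> - \<rho>))"
      if \<alpha>: "\<alpha> \<in> {0..1}" for \<alpha>
    proof (cases "\<alpha> = 0")
      case True
      then show ?thesis using estimates(2)[of \<alpha>] by simp
    next
      case False
      then show ?thesis
        using \<alpha> estimates(2,3)[of \<alpha>] m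
        by (intro sqrt_mult_le_of_squares_le[where a = \<alpha>]) (auto simp: mult_ac)
    qed
    moreover have "sqrt m * norm P > 0" using m False by simp
    ultimately show ?thesis using estimates(1,2) by (intro exI[of _ "sqrt m * norm P"]) simp
  qed
qed

theorem proposition4:
  fixes f :: "'n::finite cmat \<Rightarrow> real"
    and grad :: "'n cmat \<Rightarrow> 'n cmat"
    and \<tau> :: real
  assumes convex: "convex_on {A. hermitian A} f"
    and grad: "\<And>\<rho>. \<rho> \<in> density \<Longrightarrow> invertible \<rho> \<Longrightarrow>
                 hermitian (grad \<rho>) \<and>
                 (f has_derivative (\<lambda>H. Re (hs_inner (grad \<rho>) H))) (at \<rho> within {A. hermitian A})"
    and tau: "0 < \<tau>" "\<tau> < 1"
  shows "\<forall>\<rho>. \<rho> \<in> density \<and> invertible \<rho> \<longrightarrow>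
           (\<exists>\<alpha>\<rho>>0. \<forall>\<alpha>\<in>{0..\<alpha>\<rho>}.
              f (eg_step (grad \<rho>) \<rho> \<alpha>) \<le> f \<rho> + \<tau> * Re (hs_inner (grad \<rho>) (eg_step (grad \<rho>) \<rho> \<alpha> - \<rho>)))"
proof (intro allI impI)
  fix \<rho> :: "'n cmat"
  assume \<rho>: "\<rho> \<in> density \<and> invertible \<rho>"
  then have G: "hermitian (grad \<rho>)"
    and deriv: "(f has_derivative (\<lambda>H. grad \<rho> \<bullet> H)) (at \<rho> within {A. hermitian A})"
    using grad by (auto simp: Re_hs_inner)
  obtain c where "c > 0" and step: "\<forall>\<alpha>\<in>{0..1}. hermitian (eg_step (grad \<rho>) \<rho> \<alpha>) \<and>
      (norm (eg_step (grad \<rho>) \<rho> \<alpha> - \<rho>))^2 \<le> - \<alpha> * (grad \<rho> \<bullet> (eg_step (grad \<rho>) \<rho> \<alpha> - \<rho>)) \<and>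
      c * norm (eg_step (grad \<rho>) \<rho> \<alpha> - \<rho>) \<le> - (grad \<rho> \<bullet> (eg_step (grad \<rho>) \<rho> \<alpha> - \<rho>))"
    using eg_step_sufficient_descent[OF _ _ G] \<rho> by blast
  show "\<exists>\<alpha>\<rho>>0. \<forall>\<alpha>\<in>{0..\<alpha>\<rho>}.
      f (eg_step (grad \<rho>) \<rho> \<alpha>) \<le> f \<rho> + \<tau> * Re (hs_inner (grad \<rho>) (eg_step (grad \<rho>) \<rho> \<alpha> - \<rho>))"
    unfolding Re_hs_inner
    by (intro armijo_condition_for_small_steps[OF deriv tau(2) \<open>c > 0\<close>]) (use step in simp)
qed

end
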